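(* Let $p$ be prime and $A\subset\mathbb{Z}_{p^2}\times\mathbb{Z}_p$ be a spectral set with $\#A>p^2$. Then $A=\mathbb{Z}_{p^2}\times\mathbb{Z}_p$.
   Context: For $b=(b_1,b_2)\in G=\mathbb{Z}_{p^2}\times\mathbb{Z}_p$ let $\chi_b(a_1,a_2)=e^{2\pi i(a_1b_1/p^2+a_2b_2/p)}$. $A\subset G$ is a spectral set if there is $B\subset G$ such that $\{\chi_b|_A:b\in B\}$ is an orthogonal basis of $L^2(A)$ (counting measure). *)

theory Defs
  imports Complex_Main "HOL-Computational_Algebra.Primes"
begin

definition grp :: "nat \<Rightarrow> (nat \<times> nat) set" where
  "grp p = {..<p^2} \<times> {..<p}"

definition chr :: "nat \<Rightarrow> nat \<times> nat \<Rightarrow> nat \<times> nat \<Rightarrow> complex" where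
  "chr p b a = exp (2 * pi * \<i> *
     complex_of_real (real (fst a * fst b) / real (p^2) + real (snd a * snd b) / real p))"

definition l2_inner :: "(nat \<times> nat) set \<Rightarrow> (nat \<times> nat \<Rightarrow> complex) \<Rightarrow> (nat \<times> nat \<Rightarrow> complex) \<Rightarrow> complex" where
  "l2_inner A f g = (\<Sum>a\<in>A. f a * cnj (g a))"

definition spectral :: "nat \<Rightarrow> (nat \<times> nat) set \<Rightarrow> bool" where
  "spectral p A \<longleftrightarrow> A \<subseteq> grp p \<and>
     (\<exists>B \<subseteq> grp p.
        (\<forall>b\<in>B. \<forall>b'\<in>B. b \<noteq> b' \<longrightarrow> l2_inner A (chr p b) (chr p b') = 0) \<and>
        (\<forall>f :: nat \<times> nat \<Rightarrow> complex. \<exists>c :: nat \<times> nat \<Rightarrow> complex.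
            \<forall>a\<in>A. f a = (\<Sum>b\<in>B. c b * chr p b a)))"

end

theory Submission
  imports
    Defs
    "HOL-Number_Theory.Cong"
    "HOL-Computational_Algebra.Polynomial_Factorial"
    "HOL-Analysis.Complex_Transcendental"
begin

text \<open>
  The characters indexed by a spectrum B form an orthogonal basis of L^2(A), so #B = #A > p^2.
  Hence, for every nonzero d in G, the p-element lines {b + t d : t < p} through the points of B
  cannot be pairwise disjoint, and some b \<noteq> b' in B differ by s d with p not dividing s.
  Writing chi_d(a) = \<zeta>^<d,a> for a primitive p^2-th root of unity \<zeta>, orthogonality of
  chi_b and chi_b' on A says that the sum of \<zeta>^(s <d,a>) over a in A vanishes.
  Since Phi_{p^2}(X + 1) is Eisenstein at p, Phi_{p^2} is irreducible over the rationals and the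
  Galois automorphism taking \<zeta>^s to \<zeta> shows that the Fourier transform of the indicator
  of A vanishes at d. Fourier inversion at 0 then gives #A = #G if 0 \<in> A and #A = 0
  otherwise, so A = G.
\<close>

definition ipoly :: "int poly \<Rightarrow> 'a::comm_ring_1 \<Rightarrow> 'a" where
  "ipoly P x = poly (map_poly of_int P) x"

lemma ipoly_add [simp]: "ipoly (P + Q) x = ipoly P x + ipoly Q x"
proof -
  have "map_poly of_int (P + Q) = map_poly of_int P + (map_poly of_int Q :: 'a poly)"
    by (rule poly_eqI) (simp add: coeff_map_poly)
  then show ?thesis by (simp add: ipoly_def)
qed

lemma ipoly_mult [simp]: "ipoly (P * Q) x = ipoly P x * ipoly Q x"
proof -
  have "map_poly of_int (P * Q) = map_poly of_int P * (map_poly of_int Q :: 'a poly)"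
    by (rule poly_eqI) (simp add: coeff_map_poly coeff_mult of_int_sum)
  then show ?thesis by (simp add: ipoly_def)
qed

lemma ipoly_const [simp]: "ipoly [:c:] x = of_int c"
  by (simp add: ipoly_def map_poly_pCons)

lemma ipoly_1 [simp]: "ipoly 1 x = 1"
  by (simp add: ipoly_def)

lemma ipoly_0 [simp]: "ipoly 0 x = 0"
  by (simp add: ipoly_def)

lemma ipoly_linear [simp]: "ipoly [:1, 1:] x = x + 1"
  by (simp add: ipoly_def map_poly_pCons)

lemma ipoly_power [simp]: "ipoly (P ^ n) x = ipoly P x ^ n"
  by (induction n) simp_all

lemma ipoly_sum [simp]: "ipoly (\<Sum>i\<in>S. f i) x = (\<Sum>i\<in>S. ipoly (f i) x)"
  by (induction S rule: infinite_finite_induct) simp_all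

lemma ipoly_smult [simp]: "ipoly (smult c P) x = of_int c * ipoly P x"
  using ipoly_mult[of "[:c:]" P x] by simp

lemma prime_not_dvd_coeff_mult:
  fixes G H :: "int poly" and p :: int
  assumes "prime p" and "\<not> p dvd coeff H 0" and "\<not> p dvd coeff G j"
  shows "\<exists>i\<le>j. \<not> p dvd coeff (G * H) i"
proof -
  define i where "i = (LEAST i. \<not> p dvd coeff G i)"
  have i: "\<not> p dvd coeff G i" and "i \<le> j"
    unfolding i_def using assms(3) by (metis LeastI, metis Least_le)
  have below: "p dvd coeff G k" if "k < i" for k
    using that not_less_Least unfolding i_def by blast
  have "coeff (G * H) i = (\<Sum>k<i. coeff G k * coeff H (i - k)) + coeff G i * coeff H 0"
    by (simp add: coeff_mult lessThan_Suc_atMost[symmetric])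
  moreover have "p dvd (\<Sum>k<i. coeff G k * coeff H (i - k))"
    by (intro dvd_sum) (simp add: below)
  moreover have "\<not> p dvd coeff G i * coeff H 0"
    using assms(1,2) i prime_dvd_mult_iff by blast
  ultimately have "\<not> p dvd coeff (G * H) i"
    by (simp add: dvd_add_right_iff)
  then show ?thesis using \<open>i \<le> j\<close> by blast
qed

lemma eisenstein_factor_degree:
  fixes F G H :: "int poly" and p :: int
  assumes p: "prime p" and lead: "\<not> p dvd lead_coeff F"
    and low: "\<forall>i<degree F. p dvd coeff F i" and const: "\<not> p^2 dvd coeff F 0"
    and F: "F = G * H"
  shows "degree G = 0 \<or> degree H = 0"
proof (rule ccontr)
  assume "\<not> (degree G = 0 \<or> degree H = 0)"
  then have deg: "0 < degree G" "0 < degree H" by auto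
  have "F \<noteq> 0" using lead by auto
  then have "G \<noteq> 0" "H \<noteq> 0" using F by auto
  then have degF: "degree F = degree G + degree H" using F degree_mult_eq by blast
  have "lead_coeff G * lead_coeff H = lead_coeff F" by (simp add: F lead_coeff_mult)
  then have leadG: "\<not> p dvd lead_coeff G" and leadH: "\<not> p dvd lead_coeff H"
    using lead by (metis dvd_mult2 dvd_mult)+
  have const_mult: "coeff G 0 * coeff H 0 = coeff F 0" by (simp add: F coeff_mult_0)
  moreover have "p dvd coeff F 0" using low degF deg by simp
  ultimately have "p dvd coeff G 0 \<or> p dvd coeff H 0" using p prime_dvd_mult_iff by metis
  moreover have "\<not> (p dvd coeff G 0 \<and> p dvd coeff H 0)"
    using const const_mult by (metis mult_dvd_mono power2_eq_square)
  ultimately consider "\<not> p dvd coeff H 0" | "\<not> p dvd coeff G 0" by blast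
  then show False
  proof cases
    case 1
    then obtain i where "i \<le> degree G" "\<not> p dvd coeff F i"
      using prime_not_dvd_coeff_mult[OF p 1 leadG] F by blast
    then show False using low degF deg by simp
  next
    case 2
    then obtain i where "i \<le> degree H" "\<not> p dvd coeff F i"
      using prime_not_dvd_coeff_mult[OF p 2 leadH] F by (auto simp: mult.commute)
    then show False using low degF deg by simp
  qed
qed

lemma prime_dvd_freshman:
  fixes y :: "'a::comm_ring_1"
  assumes "prime p"
  shows "of_nat p dvd (y + 1)^p - y^p - 1"
proof -
  have p: "p \<ge> 2" using assms prime_ge_2_nat by blast
  have "(y + 1)^p = (\<Sum>k\<le>p. of_nat (p choose k) * y^k)"
    by (simp add: binomial_ring)
  also have "{..p} = insert 0 (insert p {1..<p})" using p by auto
  finally have "(y + 1)^p - y^p - 1 = (\<Sum>k\<in>{1..<p}. of_nat (p choose k) * y^k)"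
    using p by simp
  moreover have "of_nat p dvd (of_nat (p choose k) :: 'a)" if "k \<in> {1..<p}" for k
  proof -
    have "p dvd p choose k" using that assms by (intro dvd_choose_prime) auto
    then show ?thesis by (auto elim!: dvdE)
  qed
  ultimately show ?thesis by (metis (no_types, lifting) dvd_sum dvd_mult2)
qed

lemma dvd_power_diff:
  fixes a b c :: "'a::comm_ring_1"
  assumes "c dvd a - b"
  shows "c dvd a^n - b^n"
  using assms by (simp add: power_diff_sumr2)

text \<open>The cyclotomic polynomial of order p^2 is the sum of X^(p k) for k < p; this is its
  translate by X \<mapsto> X + 1, which is Eisenstein at p.\<close>

definition shifted_cyclotomic :: "nat \<Rightarrow> int poly" where
  "shifted_cyclotomic p = (\<Sum>k<p. [:1, 1:] ^ (p * k))"

lemma coeff_linear_power_above: "m < i \<Longrightarrow> coeff ([:1, 1:] ^ m :: int poly) i = 0"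
  by (rule coeff_eq_0) (simp add: degree_linear_power)

lemma coeff_shifted_cyclotomic_degree:
  assumes "p > 0"
  shows "coeff (shifted_cyclotomic p) (p * (p - 1)) = 1"
proof -
  obtain m where m: "p = Suc m" using assms by (cases p) auto
  have "coeff (shifted_cyclotomic p) (p * m) =
      (\<Sum>k<m. coeff ([:1, 1:] ^ (p * k) :: int poly) (p * m)) + 1"
    by (simp add: shifted_cyclotomic_def coeff_sum m coeff_linear_power)
  moreover have "coeff ([:1, 1:] ^ (p * k) :: int poly) (p * m) = 0" if "k < m" for k
    using that assms by (intro coeff_linear_power_above) simp
  ultimately show ?thesis by (simp add: m)
qed

lemma coeff_shifted_cyclotomic_above:
  assumes "p * (p - 1) < i"
  shows "coeff (shifted_cyclotomic p) i = 0"
proof -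
  have "coeff ([:1, 1:] ^ (p * k) :: int poly) i = 0" if "k < p" for k
  proof (rule coeff_linear_power_above)
    show "p * k < i" using that assms mult_le_mono2[of k "p - 1" p] by linarith
  qed
  then show ?thesis by (simp add: shifted_cyclotomic_def coeff_sum)
qed

lemma degree_shifted_cyclotomic: "p > 0 \<Longrightarrow> degree (shifted_cyclotomic p) = p * (p - 1)"
  by (metis coeff_shifted_cyclotomic_above coeff_shifted_cyclotomic_degree degree_le le_antisym
      le_degree zero_neq_one)

lemma lead_coeff_shifted_cyclotomic: "p > 0 \<Longrightarrow> lead_coeff (shifted_cyclotomic p) = 1"
  by (metis degree_shifted_cyclotomic coeff_shifted_cyclotomic_degree)

lemma coeff_0_shifted_cyclotomic: "coeff (shifted_cyclotomic p) 0 = int p"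
  by (simp add: shifted_cyclotomic_def coeff_sum coeff_0_power)

lemma shifted_cyclotomic_coeff_dvd:
  assumes p: "prime p" and i: "i < p * (p - 1)"
  shows "int p dvd coeff (shifted_cyclotomic p) i"
proof -
  define F where "F = shifted_cyclotomic p"
  define X :: "int poly" where "X = monom 1 1"
  define n where "n = p * (p - 1)"
  have X_power: "X ^ k = monom 1 k" for k by (simp add: X_def monom_power)
  have "F = (\<Sum>k<p. ((X + 1) ^ p) ^ k)"
    by (simp add: F_def shifted_cyclotomic_def X_def monom_Suc one_pCons power_mult)
  then have geometric: "F * ((X + 1) ^ p - 1) = ((X + 1) ^ p) ^ p - 1"
    by (simp add: power_diff_1_eq mult.commute)
  have d1: "of_nat p dvd (X + 1) ^ p - (X ^ p + 1)"
    using prime_dvd_freshman[OF p, of X] by (simp add: algebra_simps)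
  have d2: "of_nat p dvd (X ^ p + 1) ^ p - (X ^ (p * p) + 1)"
    using prime_dvd_freshman[OF p, of "X ^ p"] by (simp add: algebra_simps power_mult)
  have d3: "of_nat p dvd ((X + 1) ^ p) ^ p - (X ^ p + 1) ^ p"
    using d1 by (rule dvd_power_diff)
  txt \<open>Modulo p we have (X + 1)^(p^2) = X^(p^2) + 1, so the geometric identity forces
    F to be X^n modulo p; the following identity makes this explicit.\<close>
  have "p * p = p + n" using p prime_gt_0_nat[OF p] by (simp add: n_def algebra_simps)
  then have "X ^ p * (F - X ^ n) =
      (((X + 1) ^ p) ^ p - (X ^ p + 1) ^ p) + ((X ^ p + 1) ^ p - (X ^ (p * p) + 1))
      - F * ((X + 1) ^ p - (X ^ p + 1))"
    using geometric by (simp add: algebra_simps power_add)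
  also have "of_nat p dvd \<dots>"
    by (intro dvd_diff dvd_add dvd_mult d1 d2 d3)
  finally have "of_nat p dvd X ^ p * (F - X ^ n)" .
  then obtain g where g: "monom 1 p * (F - monom 1 n) = of_nat p * g"
    by (auto simp: X_power elim!: dvdE)
  have "coeff F i = coeff (monom 1 p * (F - monom 1 n)) (p + i)"
    using i by (simp add: coeff_monom_mult n_def)
  also have "\<dots> = int p * coeff g (p + i)"
    by (simp add: g of_nat_poly)
  finally show ?thesis by (simp add: F_def)
qed

lemma shifted_cyclotomic_factor_degree:
  assumes "prime p" and "shifted_cyclotomic p = G * H"
  shows "degree G = 0 \<or> degree H = 0"
proof (rule eisenstein_factor_degree)
  have p: "p > 0" using assms(1) prime_gt_0_nat by blast
  show "prime (int p)" using assms(1) by simp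
  show "\<not> int p dvd lead_coeff (shifted_cyclotomic p)"
    using prime_gt_1_nat[OF assms(1)] p by (simp add: lead_coeff_shifted_cyclotomic)
  show "\<forall>i<degree (shifted_cyclotomic p). int p dvd coeff (shifted_cyclotomic p) i"
    using shifted_cyclotomic_coeff_dvd[OF assms(1)] by (simp add: degree_shifted_cyclotomic p)
  show "\<not> int p ^ 2 dvd coeff (shifted_cyclotomic p) 0"
    using prime_gt_1_nat[OF assms(1)] by (simp add: coeff_0_shifted_cyclotomic power2_eq_square)
qed (use assms(2) in simp)

lemma exists_minimal_int_poly:
  fixes y :: "'a::field_char_0"
  assumes "F \<noteq> 0" and "ipoly F y = 0"
  obtains M where "content M = 1" and "degree M > 0" and "ipoly M y = 0"
    and "\<forall>R. ipoly R y = 0 \<longrightarrow> (\<exists>a s. a \<noteq> 0 \<and> smult a R = M * s)"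
proof -
  define I where "I = {R. R \<noteq> 0 \<and> ipoly R y = 0}"
  obtain M0 where M0: "M0 \<in> I" and least: "\<And>R. R \<in> I \<Longrightarrow> degree M0 \<le> degree R"
    using ex_has_least_nat[of "\<lambda>R. R \<in> I" F degree] assms by (auto simp: I_def)
  define M where "M = primitive_part M0"
  have "M0 \<noteq> 0" using M0 by (simp add: I_def)
  then have content: "content M = 1" and degree: "degree M = degree M0" and "M \<noteq> 0"
    by (auto simp: M_def)
  have "ipoly M0 y = of_int (content M0) * ipoly M y"
    by (metis M_def content_times_primitive_part ipoly_smult)
  then have root: "ipoly M y = 0" using M0 \<open>M0 \<noteq> 0\<close> by (simp add: I_def)
  have divides: "\<exists>a s. a \<noteq> 0 \<and> smult a R = M * s" if R: "ipoly R y = 0" for R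
  proof -
    obtain a s where a: "a \<noteq> 0" and division: "smult a R = M * s + pseudo_mod R M"
      using pseudo_mod(1)[OF \<open>M \<noteq> 0\<close>] by blast
    have "ipoly (pseudo_mod R M) y = 0"
      using arg_cong[OF division, of "\<lambda>P. ipoly P y"] R root by simp
    moreover have "pseudo_mod R M = 0 \<or> degree (pseudo_mod R M) < degree M0"
      using pseudo_mod(2)[OF \<open>M \<noteq> 0\<close>] degree by simp
    ultimately have "pseudo_mod R M = 0"
      using least[of "pseudo_mod R M"] by (force simp: I_def)
    then show ?thesis using a division by auto
  qed
  have "degree M > 0"
  proof (rule ccontr)
    assume "\<not> degree M > 0"
    then obtain c where "M = [:c:]" by (metis degree_eq_zeroE not_gr0)
    then show False using root \<open>M \<noteq> 0\<close> by simp
  qed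
  then show ?thesis using that content root divides by blast
qed

lemma content_1_dvd_smult:
  fixes M R :: "int poly"
  assumes "content M = 1" and "a \<noteq> 0" and "smult a R = M * s"
  shows "M dvd R"
proof (rule fract_poly_dvdD[OF _ assms(1)])
  have "fract_poly M dvd smult (to_fract a) (fract_poly R)"
    using arg_cong[OF assms(3), of fract_poly] by simp
  then show "fract_poly M dvd fract_poly R"
    using assms(2) by (simp add: dvd_smult_iff)
qed

lemma ipoly_root_transfer:
  fixes y z :: "'a::field_char_0"
  assumes irreducible: "\<And>G H. F = G * H \<Longrightarrow> degree G = 0 \<or> degree H = 0"
    and "F \<noteq> 0" and "ipoly F y = 0" and "ipoly F z = 0" and "ipoly Q y = 0"
  shows "ipoly Q z = 0"
proof -
  obtain M where content: "content M = 1" and "degree M > 0" and "ipoly M y = 0"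
    and divides: "\<forall>R. ipoly R y = 0 \<longrightarrow> (\<exists>a s. a \<noteq> 0 \<and> smult a R = M * s)"
    using exists_minimal_int_poly[OF assms(2,3)] .
  obtain a s where "a \<noteq> 0" and "smult a F = M * s"
    using divides[rule_format, OF assms(3)] by blast
  then have "M dvd F" by (rule content_1_dvd_smult[OF content])
  then obtain t where t: "F = M * t" by (rule dvdE)
  have "degree t = 0" using irreducible[OF t] \<open>degree M > 0\<close> by simp
  then obtain c where c: "t = [:c:]" by (rule degree_eq_zeroE)
  then have "c \<noteq> 0" using assms(2) t by auto
  moreover have "ipoly F z = ipoly M z * of_int c" by (simp add: t c)
  ultimately have Mz: "ipoly M z = 0" using assms(4) by simp
  obtain a s where "a \<noteq> 0" and "smult a Q = M * s"
    using divides[rule_format, OF assms(5)] by blast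
  then have "of_int a * ipoly Q z = ipoly M z * ipoly s z"
    by (metis ipoly_mult ipoly_smult)
  then show ?thesis using \<open>a \<noteq> 0\<close> Mz by simp
qed

definition unit_root :: "nat \<Rightarrow> complex" where
  "unit_root n = exp (2 * of_real pi * \<i> / of_nat n)"

lemma unit_root_power: "unit_root n ^ j = exp (2 * of_real pi * \<i> * of_nat j / of_nat n)"
  unfolding unit_root_def exp_of_nat_mult[symmetric] by (simp add: mult_ac)

lemma unit_root_power_eq_iff:
  "n > 0 \<Longrightarrow> unit_root n ^ j = unit_root n ^ k \<longleftrightarrow> [j = k] (mod n)"
  by (simp add: unit_root_power complex_root_unity_eq cong_def)

lemma unit_root_power_eq_1_iff: "n > 0 \<Longrightarrow> unit_root n ^ j = 1 \<longleftrightarrow> n dvd j"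
  by (simp add: unit_root_power complex_root_unity_eq_1)

lemma unit_root_power_mult_cnj: "unit_root n ^ j * cnj (unit_root n ^ j) = 1"
proof -
  have "unit_root n ^ j = exp (\<i> * of_real (2 * pi * real j / real n))"
    by (simp add: unit_root_power mult_ac)
  then have "norm (unit_root n ^ j) = 1" by simp
  then show ?thesis using complex_norm_square[of "unit_root n ^ j"] by simp
qed

lemma sum_unit_root_powers:
  assumes "n > 0" and "n dvd a * m"
  shows "(\<Sum>k<m. (unit_root n ^ a) ^ k) = (if n dvd a then of_nat m else 0)"
proof (cases "n dvd a")
  case False
  have "(unit_root n ^ a) ^ m = 1" "unit_root n ^ a \<noteq> 1"
    using assms False by (simp_all add: unit_root_power_eq_1_iff power_mult[symmetric])
  then show ?thesis using False by (simp add: sum_gp_strict)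
next
  case True
  then have "unit_root n ^ a = 1" using assms(1) by (simp add: unit_root_power_eq_1_iff)
  then show ?thesis using True by simp
qed

definition pairing :: "nat \<Rightarrow> nat \<times> nat \<Rightarrow> nat \<times> nat \<Rightarrow> nat" where
  "pairing p b a = fst a * fst b + p * (snd a * snd b)"

lemma chr_eq_unit_root: "p > 0 \<Longrightarrow> chr p b a = unit_root (p^2) ^ pairing p b a"
proof -
  assume "p > 0"
  then have "real (fst a * fst b) / real (p^2) + real (snd a * snd b) / real p
      = real (pairing p b a) / real (p^2)"
    by (simp add: pairing_def field_simps power2_eq_square)
  then show ?thesis by (simp add: chr_def unit_root_power mult_ac)
qed

lemma sum_grp_unit_root_pairing:
  assumes "p > 0" and a: "a \<in> grp p"
  shows "(\<Sum>d\<in>grp p. unit_root (p^2) ^ pairing p d a) = (if a = (0, 0) then of_nat (p^2 * p) else 0)"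
proof -
  define \<zeta> where "\<zeta> = unit_root (p^2)"
  have "(\<Sum>d\<in>grp p. \<zeta> ^ pairing p d a) = (\<Sum>d1<p^2. \<Sum>d2<p. (\<zeta> ^ fst a) ^ d1 * (\<zeta> ^ (p * snd a)) ^ d2)"
    by (simp add: grp_def sum.cartesian_product prod.case_eq_if pairing_def power_add
        power_mult[symmetric] mult_ac)
  also have "\<dots> = (\<Sum>d1<p^2. (\<zeta> ^ fst a) ^ d1) * (\<Sum>d2<p. (\<zeta> ^ (p * snd a)) ^ d2)"
    by (simp add: sum_product)
  also have "\<dots> = (if fst a = 0 then of_nat (p^2) else 0) * (if snd a = 0 then of_nat p else 0)"
  proof -
    have "p^2 dvd fst a \<longleftrightarrow> fst a = 0" "p^2 dvd p * snd a \<longleftrightarrow> snd a = 0"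
      using a assms(1) by (auto simp: grp_def power2_eq_square dest: dvd_imp_le)
    then show ?thesis using assms(1)
      by (simp add: \<zeta>_def sum_unit_root_powers power2_eq_square mult_ac)
  qed
  finally show ?thesis by (cases a) (simp add: \<zeta>_def)
qed

lemma ipoly_shifted_cyclotomic_unit_root:
  assumes p: "prime p" and "\<not> p dvd t"
  shows "ipoly (shifted_cyclotomic p) (unit_root (p^2) ^ t - 1) = 0"
proof -
  have "p > 0" using p prime_gt_0_nat by blast
  have "ipoly (shifted_cyclotomic p) (unit_root (p^2) ^ t - 1) = (\<Sum>k<p. (unit_root (p^2) ^ (t * p)) ^ k)"
    by (simp add: shifted_cyclotomic_def power_mult[symmetric] mult_ac)
  also have "\<dots> = 0"
    using \<open>p > 0\<close> assms(2) by (subst sum_unit_root_powers) (auto simp: power2_eq_square)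
  finally show ?thesis .
qed

lemma sum_unit_root_powers_galois:
  assumes p: "prime p" and "\<not> p dvd s"
    and "(\<Sum>a\<in>A. (unit_root (p^2) ^ s) ^ f a) = 0"
  shows "(\<Sum>a\<in>A. unit_root (p^2) ^ f a) = 0"
proof -
  define Q :: "int poly" where "Q = (\<Sum>a\<in>A. [:1, 1:] ^ f a)"
  have ipoly_Q: "ipoly Q (w - 1) = (\<Sum>a\<in>A. w ^ f a)" for w :: complex
    by (simp only: Q_def ipoly_sum ipoly_power ipoly_linear diff_add_cancel)
  have "ipoly Q (unit_root (p^2) ^ 1 - 1) = 0"
  proof (rule ipoly_root_transfer)
    show "shifted_cyclotomic p = G * H \<Longrightarrow> degree G = 0 \<or> degree H = 0" for G H
      by (rule shifted_cyclotomic_factor_degree[OF p])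
    show "shifted_cyclotomic p \<noteq> 0"
      using lead_coeff_shifted_cyclotomic[OF prime_gt_0_nat[OF p]] by auto
    show "ipoly (shifted_cyclotomic p) (unit_root (p^2) ^ s - 1) = 0"
      by (rule ipoly_shifted_cyclotomic_unit_root[OF p assms(2)])
    show "ipoly (shifted_cyclotomic p) (unit_root (p^2) ^ 1 - 1) = 0"
      using prime_gt_1_nat[OF p] by (intro ipoly_shifted_cyclotomic_unit_root[OF p]) simp
    show "ipoly Q (unit_root (p^2) ^ s - 1) = 0"
      using assms(3) by (simp only: ipoly_Q)
  qed
  then show ?thesis by (simp add: ipoly_Q)
qed

lemma card_orthogonal_spanning_family:
  fixes e :: "'b \<Rightarrow> nat \<times> nat \<Rightarrow> complex"
  assumes A: "finite A" "A \<noteq> {}" and B: "finite B"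
    and unimodular: "\<And>b a. e b a * cnj (e b a) = 1"
    and orth: "\<forall>b\<in>B. \<forall>b'\<in>B. b \<noteq> b' \<longrightarrow> l2_inner A (e b) (e b') = 0"
    and span: "\<forall>f. \<exists>c. \<forall>a\<in>A. f a = (\<Sum>b\<in>B. c b * e b a)"
  shows "card B = card A"
proof -
  obtain a0 where a0: "a0 \<in> A" using A(2) by blast
  obtain c where c: "\<And>a. a \<in> A \<Longrightarrow> (if a = a0 then 1 else 0) = (\<Sum>b\<in>B. c b * e b a)"
    using spec[OF span, of "\<lambda>a. if a = a0 then 1 else 0"] by blast
  have inner: "l2_inner A (e b) (e b') = (if b = b' then of_nat (card A) else 0)"
    if "b \<in> B" "b' \<in> B" for b b'
    using orth that by (simp add: l2_inner_def unimodular)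
  have coefficient: "c b' * of_nat (card A) = cnj (e b' a0)" if "b' \<in> B" for b'
  proof -
    have "cnj (e b' a0) = (\<Sum>a\<in>A. if a = a0 then cnj (e b' a) else 0)"
      using A(1) a0 by (simp add: sum.delta)
    also have "\<dots> = (\<Sum>a\<in>A. (\<Sum>b\<in>B. c b * e b a) * cnj (e b' a))"
      by (intro sum.cong refl) (simp flip: c)
    also have "\<dots> = (\<Sum>a\<in>A. \<Sum>b\<in>B. c b * (e b a * cnj (e b' a)))"
      by (simp add: sum_distrib_right mult.assoc)
    also have "\<dots> = (\<Sum>b\<in>B. c b * l2_inner A (e b) (e b'))"
      by (subst sum.swap) (simp add: l2_inner_def sum_distrib_left)
    also have "\<dots> = (\<Sum>b\<in>B. if b = b' then c b * of_nat (card A) else 0)"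
      by (intro sum.cong refl) (simp add: inner that)
    also have "\<dots> = c b' * of_nat (card A)"
      using B that by simp
    finally show ?thesis by simp
  qed
  have "card A \<noteq> 0" using A by simp
  have "1 = (\<Sum>b\<in>B. c b * e b a0)" using c[OF a0] by simp
  also have "\<dots> = (\<Sum>b\<in>B. cnj (e b a0) * e b a0 / of_nat (card A))"
    using coefficient \<open>card A \<noteq> 0\<close> by (intro sum.cong) (simp_all add: eq_divide_eq)
  also have "\<dots> = of_nat (card B) / of_nat (card A)"
    by (simp add: unimodular mult.commute[of "cnj _"])
  finally show ?thesis using \<open>card A \<noteq> 0\<close> by (simp add: field_simps)
qed

lemma card_grp: "card (grp p) = p^2 * p"
  by (simp add: grp_def card_cartesian_product)

lemma finite_grp [simp]: "finite (grp p)"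
  by (simp add: grp_def)

definition is_shift :: "nat \<Rightarrow> nat \<times> nat \<Rightarrow> nat \<Rightarrow> nat \<times> nat \<Rightarrow> nat \<times> nat \<Rightarrow> bool" where
  "is_shift p b s d b' \<longleftrightarrow>
     [fst b' = fst b + s * fst d] (mod p^2) \<and> [snd b' = snd b + s * snd d] (mod p)"

definition line_point :: "nat \<Rightarrow> nat \<times> nat \<Rightarrow> nat \<times> nat \<Rightarrow> nat \<Rightarrow> nat \<times> nat" where
  "line_point p b d t = ((fst b + t * fst d) mod p^2, (snd b + t * snd d) mod p)"

lemma line_point_in_grp: "p > 0 \<Longrightarrow> line_point p b d t \<in> grp p"
  by (simp add: line_point_def grp_def)

lemma line_point_eq_imp_is_shift:
  assumes "line_point p b d t = line_point p b' d t'" and "t' \<le> t"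
  shows "is_shift p b (t - t') d b'"
proof -
  have t: "(t - t') * x + t' * x = t * x" for x :: nat
    using assms(2) by (simp flip: add_mult_distrib)
  have "[fst b' + t' * fst d = fst b + (t - t') * fst d + t' * fst d] (mod p^2)"
       "[snd b' + t' * snd d = snd b + (t - t') * snd d + t' * snd d] (mod p)"
    using assms(1) by (simp_all add: line_point_def cong_def prod_eq_iff add.assoc t)
  then show ?thesis by (simp add: is_shift_def cong_add_rcancel_nat)
qed

lemma is_shift_0_imp_eq:
  assumes "is_shift p b 0 d b'" and "b \<in> grp p" and "b' \<in> grp p"
  shows "b = b'"
  using assms by (auto simp: is_shift_def grp_def cong_def prod_eq_iff)

lemma is_shift_self_imp_zero:
  assumes p: "prime p" and "\<not> p dvd s" and d: "d \<in> grp p" and "is_shift p b s d b"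
  shows "d = (0, 0)"
proof -
  have "coprime (p^2) s" "coprime p s"
    using p assms(2) by (simp_all add: prime_imp_coprime)
  moreover have "p^2 dvd s * fst d" "p dvd s * snd d"
    using assms(4) by (simp_all add: is_shift_def cong_sym_eq[of "fst b"] cong_sym_eq[of "snd b"]
        cong_add_lcancel_0_nat cong_0_iff)
  ultimately have "p^2 dvd fst d" "p dvd snd d"
    by (simp_all add: coprime_dvd_mult_right_iff)
  then show ?thesis using d by (auto simp: grp_def prod_eq_iff dest: dvd_imp_le)
qed

lemma exists_is_shift_pair:
  assumes p: "prime p" and B: "B \<subseteq> grp p" and card: "card B > p^2"
    and d: "d \<in> grp p" "d \<noteq> (0, 0)"
  obtains b b' s where "b \<in> B" "b' \<in> B" "b \<noteq> b'" "\<not> p dvd s" "is_shift p b s d b'"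
proof (rule ccontr)
  txt \<open>Otherwise the lines through the points of B in direction d are disjoint p-sets in G.\<close>
  assume no_pair: "\<not> thesis"
  note pair = that
  have "p > 0" using p prime_gt_0_nat by blast
  have no_shift: "\<not> is_shift p b s d b'" if "b \<in> B" "b' \<in> B" "0 < s" "s < p" for b b' s
  proof
    assume shift: "is_shift p b s d b'"
    have "\<not> p dvd s" using that(3,4) by (auto dest: dvd_imp_le)
    show False
    proof (cases "b = b'")
      case True
      then show False using is_shift_self_imp_zero[OF p \<open>\<not> p dvd s\<close> d(1)] shift d(2) by simp
    next
      case False
      then show False using no_pair pair that(1,2) \<open>\<not> p dvd s\<close> shift by blast
    qed
  qed
  have meet_le: "b = b' \<and> t = t'"
    if "b \<in> B" "b' \<in> B" "t < p" "t' \<le> t" "line_point p b d t = line_point p b' d t'" for b b' t t'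
  proof -
    have shift: "is_shift p b (t - t') d b'" using that(5,4) by (rule line_point_eq_imp_is_shift)
    then have "t = t'" using no_shift[OF that(1,2), of "t - t'"] that(3,4) by fastforce
    moreover have "b = b'"
      using shift \<open>t = t'\<close> that(1,2) B by (intro is_shift_0_imp_eq) auto
    ultimately show ?thesis by simp
  qed
  have meet: "b = b' \<and> t = t'"
    if "b \<in> B" "b' \<in> B" "t < p" "t' < p" "line_point p b d t = line_point p b' d t'" for b b' t t'
    using meet_le[of b b' t t'] meet_le[of b' b t' t] that by (metis nat_le_linear)
  have "card (\<Union>b\<in>B. line_point p b d ` {..<p}) = (\<Sum>b\<in>B. card (line_point p b d ` {..<p}))"
    using finite_subset[OF B finite_grp] by (intro card_UN_disjoint) (auto dest: meet)
  also have "\<dots> = card B * p"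
    using meet by (simp add: card_image inj_on_def)
  finally have "card B * p = card (\<Union>b\<in>B. line_point p b d ` {..<p})" ..
  also have "\<dots> \<le> card (grp p)"
    by (intro card_mono finite_grp UN_least image_subsetI line_point_in_grp \<open>p > 0\<close>)
  finally show False using card \<open>p > 0\<close> by (simp add: card_grp)
qed

lemma pairing_is_shift:
  assumes "is_shift p b s d b'"
  shows "[pairing p b' a = pairing p b a + s * pairing p d a] (mod p^2)"
proof -
  have "[fst a * fst b' = fst a * (fst b + s * fst d)] (mod p^2)"
    using assms by (simp add: is_shift_def cong_scalar_left)
  moreover have "[p * (snd a * snd b') = p * (snd a * (snd b + s * snd d))] (mod p^2)"
    using assms cong_cmult_leftI[of "snd a * snd b'" _ p p]
    by (simp add: is_shift_def cong_scalar_left power2_eq_square)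
  ultimately have "[pairing p b' a = fst a * (fst b + s * fst d) + p * (snd a * (snd b + s * snd d))] (mod p^2)"
    unfolding pairing_def by (rule cong_add)
  then show ?thesis by (simp add: pairing_def algebra_simps)
qed

lemma spectrum_unit_root_sum_eq_0:
  assumes p: "prime p" and B: "B \<subseteq> grp p" and card: "card B > p^2"
    and orth: "\<forall>b\<in>B. \<forall>b'\<in>B. b \<noteq> b' \<longrightarrow> l2_inner A (chr p b) (chr p b') = 0"
    and d: "d \<in> grp p" "d \<noteq> (0, 0)"
  shows "(\<Sum>a\<in>A. unit_root (p^2) ^ pairing p d a) = 0"
proof -
  have "p > 0" using p prime_gt_0_nat by blast
  obtain b b' s where bb': "b \<in> B" "b' \<in> B" "b \<noteq> b'" and s: "\<not> p dvd s" "is_shift p b s d b'"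
    using exists_is_shift_pair[OF p B card d] .
  define \<zeta> where "\<zeta> = unit_root (p^2)"
  have "chr p b' a * cnj (chr p b a) = (\<zeta> ^ s) ^ pairing p d a" for a
  proof -
    have "chr p b' a = \<zeta> ^ (pairing p b a + s * pairing p d a)"
      unfolding chr_eq_unit_root[OF \<open>p > 0\<close>] \<zeta>_def
      using \<open>p > 0\<close> pairing_is_shift[OF s(2)] by (subst unit_root_power_eq_iff) simp_all
    also have "\<dots> = (\<zeta> ^ s) ^ pairing p d a * \<zeta> ^ pairing p b a"
      by (simp add: power_add power_mult)
    finally show ?thesis
      using unit_root_power_mult_cnj[of "p^2" "pairing p b a"]
      by (simp add: chr_eq_unit_root[OF \<open>p > 0\<close>] \<zeta>_def mult.assoc)
  qed
  then have "(\<Sum>a\<in>A. (\<zeta> ^ s) ^ pairing p d a) = l2_inner A (chr p b') (chr p b)"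
    by (simp add: l2_inner_def)
  also have "\<dots> = 0" using orth[rule_format, OF bb'(2,1)] bb'(3) by simp
  finally show ?thesis unfolding \<zeta>_def by (rule sum_unit_root_powers_galois[OF p s(1)])
qed

lemma fourier_vanishing_imp_eq_grp:
  assumes "p > 0" and A: "A \<subseteq> grp p" "A \<noteq> {}"
    and vanish: "\<And>d. d \<in> grp p \<Longrightarrow> d \<noteq> (0, 0) \<Longrightarrow> (\<Sum>a\<in>A. unit_root (p^2) ^ pairing p d a) = 0"
  shows "A = grp p"
proof -
  have "finite A" using finite_subset[OF A(1) finite_grp] .
  have "(0, 0) \<in> grp p" using assms(1) by (simp add: grp_def)
  then have "of_nat (card A) = (\<Sum>d\<in>grp p. \<Sum>a\<in>A. unit_root (p^2) ^ pairing p d a)"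
    using vanish by (simp add: sum.remove[of "grp p" "(0, 0)"] pairing_def)
  also have "\<dots> = (\<Sum>a\<in>A. \<Sum>d\<in>grp p. unit_root (p^2) ^ pairing p d a)"
    by (rule sum.swap)
  also have "\<dots> = (\<Sum>a\<in>A. if a = (0, 0) then of_nat (p^2 * p) else 0)"
    using A(1) by (intro sum.cong refl sum_grp_unit_root_pairing[OF assms(1)]) auto
  also have "\<dots> = (if (0, 0) \<in> A then of_nat (p^2 * p) else 0)"
    using \<open>finite A\<close> by simp
  also have "\<dots> = of_nat (if (0, 0) \<in> A then card (grp p) else 0)"
    by (simp add: card_grp)
  finally have "card A = (if (0, 0) \<in> A then card (grp p) else 0)"
    by (simp only: of_nat_eq_iff)
  moreover have "card A \<noteq> 0" using A(2) \<open>finite A\<close> by simp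
  ultimately have "card A = card (grp p)" by presburger
  then show ?thesis using A(1) by (simp add: card_subset_eq)
qed

theorem lemma5p2:
  fixes p :: nat and A :: "(nat \<times> nat) set"
  assumes "prime p"
    and "A \<subseteq> grp p"
    and "spectral p A"
    and "card A > p^2"
  shows "A = grp p"
proof -
  have "p > 0" using assms(1) prime_gt_0_nat by blast
  obtain B where B: "B \<subseteq> grp p"
    and orth: "\<forall>b\<in>B. \<forall>b'\<in>B. b \<noteq> b' \<longrightarrow> l2_inner A (chr p b) (chr p b') = 0"
    and span: "\<forall>f. \<exists>c. \<forall>a\<in>A. f a = (\<Sum>b\<in>B. c b * chr p b a)"
    using assms(3) unfolding spectral_def by blast
  have "A \<noteq> {}" using assms(4) by auto
  have "card B = card A"
  proof (rule card_orthogonal_spanning_family[OF _ \<open>A \<noteq> {}\<close> _ _ orth span])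
    show "finite A" "finite B"
      using finite_subset[OF assms(2) finite_grp] finite_subset[OF B finite_grp] .
    show "chr p b a * cnj (chr p b a) = 1" for b a
      by (simp only: chr_eq_unit_root[OF \<open>p > 0\<close>] unit_root_power_mult_cnj)
  qed
  then show ?thesis
    using spectrum_unit_root_sum_eq_0[OF assms(1) B _ orth] assms(4)
    by (intro fourier_vanishing_imp_eq_grp[OF \<open>p > 0\<close> assms(2) \<open>A \<noteq> {}\<close>]) simp
qed

end
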